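(* Let $E$ be a finite set with $\sigma$-algebra $\mathcal{E}=2^E$, and let $\mathcal{P}(E)$ denote the set of probability measures on $E$. Suppose that for every $\mu\in\mathcal{P}(E)$ a transition kernel $P_\mu(x,B)$ is given, and for $\mu\in\mathcal{P}(E)$ let $(X^\mu_n)_{n\in\mathbb{Z}_+}$ be the nonlinear Markov chain with $\mathrm{Law}(X_0^\mu)=\mu$ and $\mathbb{P}(X^\mu_{n+1}\in B\mid X^\mu_n=x)=P_{\mu_n}(x,B)$, where $\mu_n:=\mathrm{Law}(X_n^\mu)$ (so $\mu_{n+1}=\int_E P_{\mu_n}(x,\cdot)\mu_n(dx)$). Fix an integer $k\ge1$ and let $Q_\mu(x,dy)=\int P_\mu(x,dx_1)P_{\mu_1}(x_1,dx_2)\cdots P_{\mu_{k-1}}(x_{k-1},dy)$ be the $k$-step kernel. Assume: (i) there is $\alpha_k\in(0,1)$ with $\sup_{\mu,\nu\in\mathcal{P}(E)}\|Q_\mu(x,\cdot)-Q_\nu(y,\cdot)\|_{TV}\le 2(1-\alpha_k)$ for all $x,y\in E$; (ii) there is $\lambda_k\in[0,\alpha_k]$ with $\|Q_\mu(x,\cdot)-Q_\nu(x,\cdot)\|_{TV}\le\lambda_k\|\mu-\nu\|_{TV}$ for all $x\in E$, $\mu,\nu\in\mathcal{P}(E)$; (iii) there is $\lambda_1<\infty$ with $\|P_\mu(x,\cdot)-P_\nu(x,\cdot)\|_{TV}\le\lambda_1\|\mu-\nu\|_{TV}$ for all $x\in E$, $\mu,\nu\in\mathcal{P}(E)$. (Under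 these conditions there is a unique invariant measure $\pi$, i.e. $\pi P_\pi=\pi$.) Let $g:E\to\mathbb{R}$ be bounded, and for a fixed initial measure $\mu$ put $S_n=\sum_{j=0}^{n-1}g(X_j^\mu)$. Then, as $n\to\infty$, $$\frac{S_n}{n}\xrightarrow{\ \mathbb{P}\ }\mathbb{E}[g(X_0^\pi)]=\int_E g(x)\,\pi(dx),$$ where $X^\pi$ denotes the chain started from the invariant measure $\pi$.
   Context: The total variation distance is $\|\mu-\nu\|_{TV}=2\sup_{A\in\mathcal{E}}|\mu(A)-\nu(A)|$. Convergence $\xrightarrow{\mathbb{P}}$ is convergence in probability. *)

theory Defs
  imports "HOL-Probability.Probability"
begin

text \<open>Probability measures on a finite set E are represented by the type 'a pmf with 'a::finite
  (sigma-algebra = all subsets). A family of kernels P_mu(x,.) is P :: 'a pmf => 'a => 'a pmf.\<close>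

definition tv_norm :: "'a pmf \<Rightarrow> 'a pmf \<Rightarrow> real" where
  "tv_norm p q = 2 * (SUP A. \<bar>measure_pmf.prob p A - measure_pmf.prob q A\<bar>)"

definition law_step :: "('a pmf \<Rightarrow> 'a \<Rightarrow> 'a pmf) \<Rightarrow> 'a pmf \<Rightarrow> 'a pmf" where
  "law_step P \<mu> = bind_pmf \<mu> (P \<mu>)"

definition law_at :: "('a pmf \<Rightarrow> 'a \<Rightarrow> 'a pmf) \<Rightarrow> 'a pmf \<Rightarrow> nat \<Rightarrow> 'a pmf" where
  "law_at P \<mu> n = (law_step P ^^ n) \<mu>"

text \<open>kern_iter P n mu nu = nu P_mu P_{mu_1} ... P_{mu_{n-1}}.\<close>
fun kern_iter :: "('a pmf \<Rightarrow> 'a \<Rightarrow> 'a pmf) \<Rightarrow> nat \<Rightarrow> 'a pmf \<Rightarrow> 'a pmf \<Rightarrow> 'a pmf" where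
  "kern_iter P 0 \<mu> \<nu> = \<nu>"
| "kern_iter P (Suc n) \<mu> \<nu> = kern_iter P n (law_step P \<mu>) (bind_pmf \<nu> (P \<mu>))"

definition kstep_kernel :: "('a pmf \<Rightarrow> 'a \<Rightarrow> 'a pmf) \<Rightarrow> nat \<Rightarrow> 'a pmf \<Rightarrow> 'a \<Rightarrow> 'a pmf" where
  "kstep_kernel P k \<mu> x = kern_iter P k \<mu> (return_pmf x)"

definition nonlinear_markov_chain ::
  "'b measure \<Rightarrow> ('a pmf \<Rightarrow> 'a \<Rightarrow> 'a pmf) \<Rightarrow> 'a pmf \<Rightarrow> (nat \<Rightarrow> 'b \<Rightarrow> 'a) \<Rightarrow> bool" where
  "nonlinear_markov_chain M P \<mu> X \<longleftrightarrow>
     prob_space M \<and> (\<forall>n. X n \<in> measurable M (count_space UNIV)) \<and>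
     (\<forall>n (x :: nat \<Rightarrow> 'a).
        measure M {\<omega> \<in> space M. \<forall>i\<le>n. X i \<omega> = x i}
        = pmf \<mu> (x 0) * (\<Prod>i<n. pmf (P (law_at P \<mu> i) (x i)) (x (Suc i))))"

definition conv_in_prob :: "'b measure \<Rightarrow> (nat \<Rightarrow> 'b \<Rightarrow> real) \<Rightarrow> real \<Rightarrow> bool" where
  "conv_in_prob M Y c \<longleftrightarrow>
     (\<forall>\<epsilon>>0. (\<lambda>n. measure M {\<omega> \<in> space M. \<bar>Y n \<omega> - c\<bar> > \<epsilon>}) \<longlonglongrightarrow> 0)"

end

theory Submission
  imports Defs
begin

text \<open>Let \<mu>_j be the law of X_j and h = g - E_\<pi> g. Couple \<mu>_j maximally with \<pi> = \<pi> Q_\<pi>: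
  by (ii) the common mass is moved by Q_{\<mu>_j} and Q_\<pi> to laws at distance at most \<lambda>_k D,
  where D = \<parallel>\<mu>_j - \<pi>\<parallel>, and by (i) the rest to laws at distance at most 2(1 - \<alpha>_k).
  Since \<lambda>_k \<le> \<alpha>_k this gives \<parallel>\<mu>_{j+k} - \<pi>\<parallel> \<le> D (1 - \<alpha>_k D / 2), hence \<mu>_j \<rightarrow> \<pi> and
  E h(X_j) \<rightarrow> 0.

  By (i), conditional expectations over k steps shrink the oscillation of a function by the
  factor 1 - \<alpha>_k, so for i \<le> j the covariance term E[h(X_i) h(X_j)] is bounded by
  \<parallel>h\<parallel> (|E h(X_j)| + 2 \<parallel>h\<parallel> (1 - \<alpha>_k)^\<lfloor>(j - i)/k\<rfloor>). Summing and using Cesaro means,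
  E[(S_n - n E_\<pi> g)^2] = o(n^2), and Chebyshev's inequality gives the convergence in probability.\<close>

section \<open>Distributions on a finite type\<close>

lemma pmf_bind_finite:
  fixes p :: "'a::finite pmf"
  shows "pmf (bind_pmf p K) y = (\<Sum>x\<in>UNIV. pmf p x * pmf (K x) y)"
  unfolding pmf_bind by (subst integral_measure_pmf_real[of UNIV]) (auto simp: mult.commute)

lemma sum_pmf_UNIV: "(\<Sum>x\<in>(UNIV::'a::finite set). pmf p x) = 1"
  by (rule sum_pmf_eq_1) auto

definition pmf_avg :: "'a::finite pmf \<Rightarrow> ('a \<Rightarrow> real) \<Rightarrow> real" where
  "pmf_avg p f = (\<Sum>x\<in>UNIV. pmf p x * f x)"

lemma expectation_eq_pmf_avg:
  fixes p :: "'a::finite pmf"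
  shows "measure_pmf.expectation p f = pmf_avg p f"
  unfolding pmf_avg_def by (subst integral_measure_pmf_real[of UNIV]) (auto simp: mult.commute)

lemma pmf_avg_const [simp]: "pmf_avg p (\<lambda>_. c) = c"
  by (simp add: pmf_avg_def sum_distrib_right[symmetric] sum_pmf_UNIV)

lemma pmf_avg_return [simp]: "pmf_avg (return_pmf x) f = f x"
  by (simp add: pmf_avg_def pmf_return)

lemma pmf_avg_add: "pmf_avg p (\<lambda>x. f x + g x) = pmf_avg p f + pmf_avg p g"
  by (simp add: pmf_avg_def distrib_left sum.distrib)

lemma pmf_avg_cmult: "pmf_avg p (\<lambda>x. c * f x) = c * pmf_avg p f"
  by (simp add: pmf_avg_def sum_distrib_left mult_ac)

lemma pmf_avg_bind:
  fixes p :: "'a::finite pmf" and K :: "'a \<Rightarrow> 'b::finite pmf"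
  shows "pmf_avg (bind_pmf p K) f = pmf_avg p (\<lambda>x. pmf_avg (K x) f)"
  unfolding pmf_avg_def pmf_bind_finite
  by (simp add: sum_distrib_left sum_distrib_right mult.assoc) (rule sum.swap)

lemma pmf_avg_diff: "pmf_avg p f - pmf_avg q f = (\<Sum>x\<in>UNIV. (pmf p x - pmf q x) * f x)"
  by (simp add: pmf_avg_def sum_subtractf left_diff_distrib)

lemma abs_pmf_avg_le:
  assumes "\<And>x. \<bar>f x\<bar> \<le> B"
  shows "\<bar>pmf_avg p f\<bar> \<le> B"
proof -
  have "\<bar>pmf_avg p f\<bar> \<le> (\<Sum>x\<in>UNIV. pmf p x * B)"
    unfolding pmf_avg_def
    by (rule order.trans[OF sum_abs], rule sum_mono) (simp add: abs_mult assms mult_left_mono)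
  then show ?thesis by (simp add: sum_distrib_right[symmetric] sum_pmf_UNIV)
qed

lemma sum_pmf_diff:
  fixes p q :: "'a::finite pmf"
  shows "(\<Sum>x\<in>UNIV. pmf p x - pmf q x) = 0"
  by (simp add: sum_subtractf sum_pmf_UNIV)

lemma sum_pos_part_eq_half:
  fixes d :: "'a::finite \<Rightarrow> real"
  assumes "(\<Sum>x\<in>UNIV. d x) = 0"
  shows "(\<Sum>x\<in>UNIV. max (d x) 0) = (\<Sum>x\<in>UNIV. \<bar>d x\<bar>) / 2"
    and "(\<Sum>x\<in>UNIV. max (- d x) 0) = (\<Sum>x\<in>UNIV. \<bar>d x\<bar>) / 2"
proof -
  have pos: "max (d x) 0 = (\<bar>d x\<bar> + d x) / 2" and neg: "max (- d x) 0 = (\<bar>d x\<bar> - d x) / 2" for x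
    by (auto simp: max_def)
  show "(\<Sum>x\<in>UNIV. max (d x) 0) = (\<Sum>x\<in>UNIV. \<bar>d x\<bar>) / 2"
    unfolding pos using assms by (simp add: sum_divide_distrib[symmetric] sum.distrib)
  show "(\<Sum>x\<in>UNIV. max (- d x) 0) = (\<Sum>x\<in>UNIV. \<bar>d x\<bar>) / 2"
    unfolding neg using assms by (simp add: sum_divide_distrib[symmetric] sum_subtractf)
qed

lemma tv_norm_eq_l1:
  fixes p q :: "'a::finite pmf"
  shows "tv_norm p q = (\<Sum>x\<in>UNIV. \<bar>pmf p x - pmf q x\<bar>)"
proof -
  let ?d = "\<lambda>x. pmf p x - pmf q x"
  let ?L = "\<Sum>x\<in>UNIV. \<bar>?d x\<bar>"
  note half = sum_pos_part_eq_half[OF sum_pmf_diff[of p q]]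
  have prob_diff: "measure_pmf.prob p A - measure_pmf.prob q A = (\<Sum>x\<in>A. ?d x)" for A
    by (simp add: measure_measure_pmf_finite sum_subtractf)
  have le_pos_part: "(\<Sum>x\<in>A. e x) \<le> (\<Sum>x\<in>UNIV. max (e x) 0)" for A :: "'a set" and e :: "'a \<Rightarrow> real"
  proof -
    have "(\<Sum>x\<in>A. e x) \<le> (\<Sum>x\<in>A. max (e x) 0)" by (rule sum_mono) auto
    also have "\<dots> \<le> (\<Sum>x\<in>UNIV. max (e x) 0)" by (rule sum_mono2) auto
    finally show ?thesis .
  qed
  have bound: "\<bar>measure_pmf.prob p A - measure_pmf.prob q A\<bar> \<le> ?L / 2" for A
    using le_pos_part[where A = A and e = ?d] le_pos_part[where A = A and e = "\<lambda>x. - ?d x"]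
    unfolding prob_diff half abs_le_iff by (simp add: sum_subtractf)
  let ?B = "{x. 0 < ?d x}"
  have "(\<Sum>x\<in>?B. ?d x) = (\<Sum>x\<in>UNIV. max (?d x) 0)"
    by (rule sum.mono_neutral_cong_left) auto
  then have attained: "\<bar>measure_pmf.prob p ?B - measure_pmf.prob q ?B\<bar> = ?L / 2"
    unfolding prob_diff half(1)[symmetric] by (simp add: sum_nonneg)
  have "(SUP A. \<bar>measure_pmf.prob p A - measure_pmf.prob q A\<bar>) = ?L / 2"
  proof (rule antisym)
    show "(SUP A. \<bar>measure_pmf.prob p A - measure_pmf.prob q A\<bar>) \<le> ?L / 2"
      by (rule cSUP_least[OF UNIV_not_empty bound])
    show "?L / 2 \<le> (SUP A. \<bar>measure_pmf.prob p A - measure_pmf.prob q A\<bar>)"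
      unfolding attained[symmetric] by (rule cSUP_upper) (auto intro!: bdd_aboveI2 bound)
  qed
  then show ?thesis unfolding tv_norm_def by simp
qed

lemma sum_pmf_minus_min:
  fixes p q :: "'a::finite pmf"
  shows "(\<Sum>x\<in>UNIV. pmf p x - min (pmf p x) (pmf q x)) = tv_norm p q / 2"
    and "(\<Sum>x\<in>UNIV. pmf q x - min (pmf p x) (pmf q x)) = tv_norm p q / 2"
proof -
  have "pmf p x - min (pmf p x) (pmf q x) = max (pmf p x - pmf q x) 0"
    and "pmf q x - min (pmf p x) (pmf q x) = max (- (pmf p x - pmf q x)) 0" for x
    by auto
  then show "(\<Sum>x\<in>UNIV. pmf p x - min (pmf p x) (pmf q x)) = tv_norm p q / 2"
    and "(\<Sum>x\<in>UNIV. pmf q x - min (pmf p x) (pmf q x)) = tv_norm p q / 2"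
    unfolding tv_norm_eq_l1 by (simp_all only: sum_pos_part_eq_half[OF sum_pmf_diff])
qed

lemma tv_norm_nonneg: "0 \<le> tv_norm p (q :: 'a::finite pmf)"
  by (simp add: tv_norm_eq_l1 sum_nonneg)

lemma tv_norm_le_2: "tv_norm p (q :: 'a::finite pmf) \<le> 2"
proof -
  have "tv_norm p q \<le> (\<Sum>x\<in>UNIV. pmf p x + pmf q x)"
    unfolding tv_norm_eq_l1 by (rule sum_mono) (auto simp: abs_le_iff)
  then show ?thesis by (simp add: sum.distrib sum_pmf_UNIV)
qed

definition osc_le :: "('a \<Rightarrow> real) \<Rightarrow> real \<Rightarrow> bool" where
  "osc_le f c \<longleftrightarrow> (\<forall>x y. \<bar>f x - f y\<bar> \<le> c)"

lemma osc_le_nonneg: "osc_le f c \<Longrightarrow> 0 \<le> c"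
  unfolding osc_le_def by (metis abs_ge_zero order.trans)

lemma osc_le_if_abs_le: "(\<And>x. \<bar>f x\<bar> \<le> B) \<Longrightarrow> osc_le f (2 * B)"
  unfolding osc_le_def by (metis abs_triangle_ineq4 add_mono mult_2 order.trans)

lemma abs_sum_mult_le_osc:
  fixes d f :: "'a::finite \<Rightarrow> real"
  assumes sum_d: "(\<Sum>x\<in>UNIV. d x) = 0" and osc: "osc_le f c"
  shows "\<bar>\<Sum>x\<in>UNIV. d x * f x\<bar> \<le> (\<Sum>x\<in>UNIV. \<bar>d x\<bar>) / 2 * c"
proof -
  have "Min (range f) \<in> range f" by (rule Min_in) auto
  then obtain x0 where x0: "f x0 = Min (range f)" by (metis rangeE)
  have low: "f x0 \<le> f x" for x unfolding x0 by (rule Min_le) auto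
  have high: "f x - f x0 \<le> c" for x using osc unfolding osc_le_def by (metis abs_le_iff)
  have shift: "(\<Sum>x\<in>UNIV. d x * f x) = (\<Sum>x\<in>UNIV. d x * (f x - f x0))"
    using sum_d by (simp add: right_diff_distrib sum_subtractf sum_distrib_right[symmetric])
  have pos_part: "t * (f x - f x0) \<le> max t 0 * c" for t x
  proof -
    have "t * (f x - f x0) \<le> max t 0 * (f x - f x0)" using low[of x] by (intro mult_right_mono) auto
    also have "\<dots> \<le> max t 0 * c" using high[of x] by (intro mult_left_mono) auto
    finally show ?thesis .
  qed
  have "(\<Sum>x\<in>UNIV. d x * (f x - f x0)) \<le> (\<Sum>x\<in>UNIV. max (d x) 0) * c"
    unfolding sum_distrib_right by (intro sum_mono pos_part)
  moreover have "(\<Sum>x\<in>UNIV. - d x * (f x - f x0)) \<le> (\<Sum>x\<in>UNIV. max (- d x) 0) * c"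
    unfolding sum_distrib_right by (intro sum_mono pos_part)
  ultimately show ?thesis
    unfolding shift sum_pos_part_eq_half[OF sum_d] abs_le_iff by (simp add: sum_negf)
qed

lemma abs_pmf_avg_diff_le_osc:
  "osc_le f c \<Longrightarrow> \<bar>pmf_avg p f - pmf_avg q f\<bar> \<le> tv_norm p q / 2 * c"
  unfolding pmf_avg_diff tv_norm_eq_l1 by (rule abs_sum_mult_le_osc[OF sum_pmf_diff])

lemma abs_pmf_avg_diff_le:
  assumes "\<And>x. \<bar>f x\<bar> \<le> B"
  shows "\<bar>pmf_avg p f - pmf_avg q f\<bar> \<le> B * tv_norm p q"
proof -
  have "osc_le f (2 * B)" by (rule osc_le_if_abs_le[OF assms])
  from abs_pmf_avg_diff_le_osc[OF this, of p q] show ?thesis by (simp add: mult.commute)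
qed

lemma abs_sub_pmf_avg_le_osc:
  assumes "osc_le f c"
  shows "\<bar>f x - pmf_avg p f\<bar> \<le> c"
proof -
  have "\<bar>pmf_avg (return_pmf x) f - pmf_avg p f\<bar> \<le> tv_norm (return_pmf x) p / 2 * c"
    by (rule abs_pmf_avg_diff_le_osc[OF assms])
  also have "\<dots> \<le> 1 * c"
    using tv_norm_le_2[of "return_pmf x" p] osc_le_nonneg[OF assms] by (intro mult_right_mono) auto
  finally show ?thesis by simp
qed

lemma osc_le_pmf_avg_kernel:
  assumes "osc_le f c" and "\<And>x y. tv_norm (R x) (R y) \<le> 2 * r"
  shows "osc_le (\<lambda>x. pmf_avg (R x) f) (r * c)"
  unfolding osc_le_def
proof (intro allI)
  fix x y
  have "\<bar>pmf_avg (R x) f - pmf_avg (R y) f\<bar> \<le> tv_norm (R x) (R y) / 2 * c"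
    by (rule abs_pmf_avg_diff_le_osc[OF assms(1)])
  also have "\<dots> \<le> r * c"
    using assms(2)[of x y] osc_le_nonneg[OF assms(1)] by (intro mult_right_mono) auto
  finally show "\<bar>pmf_avg (R x) f - pmf_avg (R y) f\<bar> \<le> r * c" .
qed

section \<open>Conditional expectation operators of the chain\<close>

lemma law_at_0 [simp]: "law_at P \<mu> 0 = \<mu>"
  by (simp add: law_at_def)

lemma law_at_Suc: "law_at P \<mu> (Suc j) = law_step P (law_at P \<mu> j)"
  by (simp add: law_at_def)

lemma law_at_invariant: "law_step P \<pi> = \<pi> \<Longrightarrow> law_at P \<pi> n = \<pi>"
  by (induction n) (simp_all add: law_at_Suc)

text \<open>For the chain X with initial law \<mu>, transfer P \<mu> j \<psi> x = E[\<psi>(X_{j+1}) | X_j = x]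
  and transfer_pow P \<mu> i d \<psi> x = E[\<psi>(X_{i+d}) | X_i = x].\<close>

definition transfer ::
  "('a pmf \<Rightarrow> 'a \<Rightarrow> 'a pmf) \<Rightarrow> 'a pmf \<Rightarrow> nat \<Rightarrow> ('a::finite \<Rightarrow> real) \<Rightarrow> 'a \<Rightarrow> real" where
  "transfer P \<mu> j \<psi> x = pmf_avg (P (law_at P \<mu> j) x) \<psi>"

fun transfer_pow ::
  "('a pmf \<Rightarrow> 'a \<Rightarrow> 'a pmf) \<Rightarrow> 'a pmf \<Rightarrow> nat \<Rightarrow> nat \<Rightarrow> ('a::finite \<Rightarrow> real) \<Rightarrow> 'a \<Rightarrow> real" where
  "transfer_pow P \<mu> i 0 \<psi> = \<psi>"
| "transfer_pow P \<mu> i (Suc d) \<psi> = transfer P \<mu> i (transfer_pow P \<mu> (Suc i) d \<psi>)"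

lemma transfer_pow_Suc_right:
  "transfer_pow P \<mu> i (Suc d) \<psi> = transfer_pow P \<mu> i d (transfer P \<mu> (i + d) \<psi>)"
  by (induction d arbitrary: i) auto

lemma transfer_pow_add:
  "transfer_pow P \<mu> i (d + e) \<psi> = transfer_pow P \<mu> i d (transfer_pow P \<mu> (i + d) e \<psi>)"
  by (induction d arbitrary: i) auto

lemma pmf_avg_transfer:
  "pmf_avg (law_at P \<mu> j) (transfer P \<mu> j \<psi>) = pmf_avg (law_at P \<mu> (Suc j)) \<psi>"
  by (simp add: law_at_Suc law_step_def pmf_avg_bind transfer_def[abs_def])

lemma pmf_avg_transfer_pow:
  "pmf_avg (law_at P \<mu> i) (transfer_pow P \<mu> i d \<psi>) = pmf_avg (law_at P \<mu> (i + d)) \<psi>"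
  by (induction d arbitrary: i) (simp_all add: pmf_avg_transfer)

lemma pmf_avg_kern_iter:
  "pmf_avg (kern_iter P d (law_at P \<mu> i) \<nu>) \<psi> = pmf_avg \<nu> (transfer_pow P \<mu> i d \<psi>)"
  by (induction d arbitrary: i \<nu>)
    (simp_all add: law_at_Suc[symmetric] pmf_avg_bind transfer_def[abs_def])

lemma transfer_pow_eq_kstep_kernel:
  "transfer_pow P \<mu> i k \<psi> = (\<lambda>x. pmf_avg (kstep_kernel P k (law_at P \<mu> i) x) \<psi>)"
  by (simp add: kstep_kernel_def pmf_avg_kern_iter)

lemma osc_le_transfer_pow: "osc_le \<psi> c \<Longrightarrow> osc_le (transfer_pow P \<mu> i d \<psi>) c"
proof (induction d arbitrary: i)
  case (Suc d)
  have "osc_le (\<lambda>x. pmf_avg (P (law_at P \<mu> i) x) (transfer_pow P \<mu> (Suc i) d \<psi>)) (1 * c)"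
    by (rule osc_le_pmf_avg_kernel[OF Suc.IH[OF Suc.prems]]) (simp add: tv_norm_le_2)
  then show ?case by (simp add: transfer_def[abs_def])
qed simp

lemma osc_le_transfer_pow_decay:
  assumes mixing: "\<forall>x y \<mu>' \<nu>'. tv_norm (kstep_kernel P k \<mu>' x) (kstep_kernel P k \<nu>' y) \<le> 2 * (1 - a)"
    and osc: "osc_le \<psi> c"
  shows "osc_le (transfer_pow P \<mu> i d \<psi>) ((1 - a) ^ (d div k) * c)"
proof -
  have "osc_le (transfer_pow P \<mu> i d \<psi>) ((1 - a) ^ q * c)" if "q * k \<le> d" for q
    using that
  proof (induction q arbitrary: i d)
    case 0
    show ?case using osc_le_transfer_pow[OF osc] by simp
  next
    case (Suc q)
    then have split: "d = k + (d - k)" and "q * k \<le> d - k" by auto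
    then have "osc_le (transfer_pow P \<mu> (i + k) (d - k) \<psi>) ((1 - a) ^ q * c)"
      using Suc.IH by blast
    then have "osc_le (\<lambda>x. pmf_avg (kstep_kernel P k (law_at P \<mu> i) x)
        (transfer_pow P \<mu> (i + k) (d - k) \<psi>)) ((1 - a) * ((1 - a) ^ q * c))"
      by (rule osc_le_pmf_avg_kernel) (use mixing in blast)
    moreover have "transfer_pow P \<mu> i d \<psi> = transfer_pow P \<mu> i k (transfer_pow P \<mu> (i + k) (d - k) \<psi>)"
      using transfer_pow_add[of P \<mu> i k "d - k" \<psi>] split by simp
    ultimately show ?case by (simp add: transfer_pow_eq_kstep_kernel[of P \<mu> i k] mult.assoc)
  qed
  then show ?thesis by simp
qed

lemma kern_iter_bind:
  "kern_iter P n \<rho> \<nu> = bind_pmf \<nu> (\<lambda>x. kern_iter P n \<rho> (return_pmf x))"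
proof (induction n arbitrary: \<rho> \<nu>)
  case 0
  show ?case by (simp add: bind_return_pmf')
next
  case (Suc n)
  show ?case
    by (simp add: bind_return_pmf) (subst (1 2) Suc.IH, simp add: bind_assoc_pmf)
qed

lemma kern_iter_self: "kern_iter P n \<rho> \<rho> = (law_step P ^^ n) \<rho>"
  by (induction n arbitrary: \<rho>) (auto simp: law_step_def funpow_Suc_right simp del: funpow.simps)

lemma law_at_add:
  "law_at P \<mu> (j + k) = bind_pmf (law_at P \<mu> j) (kstep_kernel P k (law_at P \<mu> j))"
proof -
  have "law_at P \<mu> (j + k) = kern_iter P k (law_at P \<mu> j) (law_at P \<mu> j)"
    by (simp add: kern_iter_self law_at_def add.commute[of j k] funpow_add)
  then show ?thesis by (subst (asm) kern_iter_bind) (simp add: kstep_kernel_def[abs_def])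
qed

lemma bind_kstep_kernel_invariant:
  "law_step P \<pi> = \<pi> \<Longrightarrow> bind_pmf \<pi> (kstep_kernel P k \<pi>) = \<pi>"
  using law_at_add[of P \<pi> 0 k] by (simp add: law_at_invariant)

section \<open>Convergence of the laws to the invariant measure\<close>

lemma l1_weighted_sum_le:
  fixes w :: "'i \<Rightarrow> real" and F :: "'i \<Rightarrow> 'a::finite \<Rightarrow> real"
  assumes "\<And>i. i \<in> I \<Longrightarrow> 0 \<le> w i"
  shows "(\<Sum>z\<in>UNIV. \<bar>\<Sum>i\<in>I. w i * F i z\<bar>) \<le> (\<Sum>i\<in>I. w i * (\<Sum>z\<in>UNIV. \<bar>F i z\<bar>))"
proof -
  have "(\<Sum>z\<in>UNIV. \<bar>\<Sum>i\<in>I. w i * F i z\<bar>) \<le> (\<Sum>z\<in>UNIV. \<Sum>i\<in>I. w i * \<bar>F i z\<bar>)"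
    by (intro sum_mono order.trans[OF sum_abs]) (simp add: abs_mult assms)
  also have "\<dots> = (\<Sum>i\<in>I. w i * (\<Sum>z\<in>UNIV. \<bar>F i z\<bar>))"
    by (subst sum.swap) (simp add: sum_distrib_left)
  finally show ?thesis .
qed

lemma mixture_diff_eq_product:
  fixes A B u v :: "'a::finite \<Rightarrow> real"
  assumes same_mass: "(\<Sum>y\<in>UNIV. B y) = (\<Sum>x\<in>UNIV. A x)" and "(\<Sum>x\<in>UNIV. A x) \<noteq> 0"
  shows "(\<Sum>x\<in>UNIV. A x * u x) - (\<Sum>y\<in>UNIV. B y * v y)
    = (\<Sum>x\<in>UNIV. A x / (\<Sum>x\<in>UNIV. A x) * (\<Sum>y\<in>UNIV. B y * (u x - v y)))"
proof -
  define \<delta> where "\<delta> = (\<Sum>x\<in>UNIV. A x)"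
  let ?S = "\<Sum>y\<in>UNIV. B y * v y"
  have "(\<Sum>y\<in>UNIV. B y * (u x - v y)) = (\<Sum>y\<in>UNIV. B y) * u x - ?S" for x
    by (simp add: right_diff_distrib sum_subtractf sum_distrib_right)
  then have inner: "(\<Sum>y\<in>UNIV. B y * (u x - v y)) = \<delta> * u x - ?S" for x
    by (simp add: same_mass \<delta>_def)
  have "t / \<delta> * (\<delta> * q - ?S) = t * q - t / \<delta> * ?S" for t q
    using assms(2) by (simp add: \<delta>_def field_simps)
  then have "(\<Sum>x\<in>UNIV. A x / \<delta> * (\<Sum>y\<in>UNIV. B y * (u x - v y)))
      = (\<Sum>x\<in>UNIV. A x * u x - A x / \<delta> * ?S)"
    by (simp only: inner)
  also have "\<dots> = (\<Sum>x\<in>UNIV. A x * u x) - (\<Sum>x\<in>UNIV. A x) / \<delta> * ?S"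
    by (simp add: sum_subtractf sum_distrib_right sum_divide_distrib)
  finally show ?thesis using assms(2) by (simp add: \<delta>_def)
qed

lemma l1_mixture_diff_le:
  fixes A B :: "'a::finite \<Rightarrow> real" and Q Q' :: "'a \<Rightarrow> 'b::finite pmf"
  assumes A: "\<And>x. 0 \<le> A x" and B: "\<And>y. 0 \<le> B y"
    and same_mass: "(\<Sum>y\<in>UNIV. B y) = (\<Sum>x\<in>UNIV. A x)"
    and cross: "\<And>x y. tv_norm (Q x) (Q' y) \<le> r"
  shows "(\<Sum>z\<in>UNIV. \<bar>(\<Sum>x\<in>UNIV. A x * pmf (Q x) z) - (\<Sum>y\<in>UNIV. B y * pmf (Q' y) z)\<bar>)
    \<le> (\<Sum>x\<in>UNIV. A x) * r"
proof (cases "(\<Sum>x\<in>UNIV. A x) = 0")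
  case True
  then have "A x = 0" "B x = 0" for x
    using A B same_mass by (simp_all add: sum_nonneg_eq_0_iff)
  then show ?thesis by simp
next
  case False
  define \<delta> where "\<delta> = (\<Sum>x\<in>UNIV. A x)"
  have \<delta>: "0 < \<delta>" using False A by (simp add: \<delta>_def order_le_neq_trans sum_nonneg)
  have matched: "(\<Sum>x\<in>UNIV. A x * pmf (Q x) z) - (\<Sum>y\<in>UNIV. B y * pmf (Q' y) z)
      = (\<Sum>x\<in>UNIV. A x / \<delta> * (\<Sum>y\<in>UNIV. B y * (pmf (Q x) z - pmf (Q' y) z)))" for z
    unfolding \<delta>_def by (rule mixture_diff_eq_product[OF same_mass False])
  have "(\<Sum>z\<in>UNIV. \<bar>(\<Sum>x\<in>UNIV. A x * pmf (Q x) z) - (\<Sum>y\<in>UNIV. B y * pmf (Q' y) z)\<bar>)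
      \<le> (\<Sum>x\<in>UNIV. A x / \<delta> * (\<Sum>z\<in>UNIV. \<bar>\<Sum>y\<in>UNIV. B y * (pmf (Q x) z - pmf (Q' y) z)\<bar>))"
    unfolding matched using A \<delta> by (intro l1_weighted_sum_le) simp
  also have "\<dots> \<le> (\<Sum>x\<in>UNIV. A x / \<delta> * (\<Sum>y\<in>UNIV. B y * r))"
  proof (intro sum_mono mult_left_mono)
    fix x
    have "(\<Sum>z\<in>UNIV. \<bar>\<Sum>y\<in>UNIV. B y * (pmf (Q x) z - pmf (Q' y) z)\<bar>)
        \<le> (\<Sum>y\<in>UNIV. B y * tv_norm (Q x) (Q' y))"
      unfolding tv_norm_eq_l1 by (rule l1_weighted_sum_le) (rule B)
    also have "\<dots> \<le> (\<Sum>y\<in>UNIV. B y * r)" by (intro sum_mono mult_left_mono cross B)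
    finally show "(\<Sum>z\<in>UNIV. \<bar>\<Sum>y\<in>UNIV. B y * (pmf (Q x) z - pmf (Q' y) z)\<bar>) \<le> (\<Sum>y\<in>UNIV. B y * r)" .
  qed (use A \<delta> in simp)
  also have "\<dots> = \<delta> * r"
    using \<delta> same_mass by (simp add: sum_distrib_right[symmetric] sum_divide_distrib[symmetric] \<delta>_def)
  finally show ?thesis by (simp add: \<delta>_def)
qed

lemma pmf_bind_diff_split:
  fixes \<nu> \<nu>' :: "'a::finite pmf"
  shows "pmf (bind_pmf \<nu> Q) z - pmf (bind_pmf \<nu>' Q') z
    = (\<Sum>x\<in>UNIV. m x * (pmf (Q x) z - pmf (Q' x) z))
      + ((\<Sum>x\<in>UNIV. (pmf \<nu> x - m x) * pmf (Q x) z) - (\<Sum>y\<in>UNIV. (pmf \<nu>' y - m y) * pmf (Q' y) z))"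
  by (simp add: pmf_bind_finite left_diff_distrib right_diff_distrib sum_subtractf)

lemma tv_norm_bind_contract:
  fixes \<nu> \<nu>' :: "'a::finite pmf" and Q Q' :: "'a \<Rightarrow> 'b::finite pmf"
  assumes cross: "\<And>x y. tv_norm (Q x) (Q' y) \<le> 2 * (1 - a)"
    and same: "\<And>x. tv_norm (Q x) (Q' x) \<le> l * tv_norm \<nu> \<nu>'"
    and l: "0 \<le> l" "l \<le> a"
  shows "tv_norm (bind_pmf \<nu> Q) (bind_pmf \<nu>' Q') \<le> tv_norm \<nu> \<nu>' * (1 - a * tv_norm \<nu> \<nu>' / 2)"
proof -
  define D where "D = tv_norm \<nu> \<nu>'"
  define m where "m x = min (pmf \<nu> x) (pmf \<nu>' x)" for x
  define A where "A x = pmf \<nu> x - m x" for x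
  define B where "B x = pmf \<nu>' x - m x" for x
  have A: "0 \<le> A x" and B: "0 \<le> B x" and m: "0 \<le> m x" for x
    by (auto simp: A_def B_def m_def)
  have sum_A: "(\<Sum>x\<in>UNIV. A x) = D / 2" and sum_B: "(\<Sum>x\<in>UNIV. B x) = D / 2"
    unfolding A_def B_def m_def D_def by (rule sum_pmf_minus_min)+
  have sum_m: "(\<Sum>x\<in>UNIV. m x) = 1 - D / 2"
    using sum_A by (simp add: A_def sum_subtractf sum_pmf_UNIV)
  \<comment> \<open>Maximal coupling: the common part m is moved by Q and Q' from the same points, the excesses
    A and B (of mass D/2 each) from arbitrary ones.\<close>
  have decomp: "pmf (bind_pmf \<nu> Q) z - pmf (bind_pmf \<nu>' Q') z
      = (\<Sum>x\<in>UNIV. m x * (pmf (Q x) z - pmf (Q' x) z))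
        + ((\<Sum>x\<in>UNIV. A x * pmf (Q x) z) - (\<Sum>y\<in>UNIV. B y * pmf (Q' y) z))" for z
    unfolding A_def B_def by (rule pmf_bind_diff_split)
  have common: "(\<Sum>z\<in>UNIV. \<bar>\<Sum>x\<in>UNIV. m x * (pmf (Q x) z - pmf (Q' x) z)\<bar>) \<le> (1 - D / 2) * (l * D)"
  proof -
    have "(\<Sum>z\<in>UNIV. \<bar>\<Sum>x\<in>UNIV. m x * (pmf (Q x) z - pmf (Q' x) z)\<bar>)
        \<le> (\<Sum>x\<in>UNIV. m x * tv_norm (Q x) (Q' x))"
      unfolding tv_norm_eq_l1 by (rule l1_weighted_sum_le) (rule m)
    also have "\<dots> \<le> (\<Sum>x\<in>UNIV. m x * (l * D))"
      unfolding D_def by (intro sum_mono mult_left_mono same m)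
    finally show ?thesis by (simp add: sum_distrib_right[symmetric] sum_m)
  qed
  have excess: "(\<Sum>z\<in>UNIV. \<bar>(\<Sum>x\<in>UNIV. A x * pmf (Q x) z) - (\<Sum>y\<in>UNIV. B y * pmf (Q' y) z)\<bar>)
      \<le> D / 2 * (2 * (1 - a))"
  proof -
    have "(\<Sum>y\<in>UNIV. B y) = (\<Sum>x\<in>UNIV. A x)" using sum_A sum_B by simp
    from l1_mixture_diff_le[OF A B this cross] show ?thesis by (simp add: sum_A)
  qed
  have "tv_norm (bind_pmf \<nu> Q) (bind_pmf \<nu>' Q')
      \<le> (\<Sum>z\<in>UNIV. \<bar>\<Sum>x\<in>UNIV. m x * (pmf (Q x) z - pmf (Q' x) z)\<bar>)
        + (\<Sum>z\<in>UNIV. \<bar>(\<Sum>x\<in>UNIV. A x * pmf (Q x) z) - (\<Sum>y\<in>UNIV. B y * pmf (Q' y) z)\<bar>)"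
    unfolding tv_norm_eq_l1 decomp sum.distrib[symmetric] by (intro sum_mono abs_triangle_ineq)
  also have "\<dots> \<le> (1 - D / 2) * (l * D) + D / 2 * (2 * (1 - a))"
    using common excess by (rule add_mono)
  also have "\<dots> \<le> (1 - D / 2) * (a * D) + D / 2 * (2 * (1 - a))"
    using l tv_norm_nonneg[of \<nu> \<nu>'] tv_norm_le_2[of \<nu> \<nu>'] unfolding D_def
    by (intro add_mono mult_left_mono mult_right_mono) auto
  also have "\<dots> = D * (1 - a * D / 2)" by (simp add: algebra_simps)
  finally show ?thesis unfolding D_def .
qed

lemma tv_norm_law_at_add_le:
  fixes P :: "'a::finite pmf \<Rightarrow> 'a \<Rightarrow> 'a pmf"
  assumes mixing: "\<forall>x y \<mu>' \<nu>'. tv_norm (kstep_kernel P k \<mu>' x) (kstep_kernel P k \<nu>' y) \<le> 2 * (1 - a)"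
    and l: "0 \<le> l" "l \<le> a"
    and lipschitz: "\<forall>x \<mu>' \<nu>'. tv_norm (kstep_kernel P k \<mu>' x) (kstep_kernel P k \<nu>' x) \<le> l * tv_norm \<mu>' \<nu>'"
    and inv: "law_step P \<pi> = \<pi>"
  shows "tv_norm (law_at P \<mu> (j + k)) \<pi>
    \<le> tv_norm (law_at P \<mu> j) \<pi> * (1 - a * tv_norm (law_at P \<mu> j) \<pi> / 2)"
proof -
  have "tv_norm (law_at P \<mu> (j + k)) \<pi>
      = tv_norm (bind_pmf (law_at P \<mu> j) (kstep_kernel P k (law_at P \<mu> j)))
          (bind_pmf \<pi> (kstep_kernel P k \<pi>))"
    by (simp add: law_at_add bind_kstep_kernel_invariant[OF inv])
  also have "\<dots> \<le> tv_norm (law_at P \<mu> j) \<pi> * (1 - a * tv_norm (law_at P \<mu> j) \<pi> / 2)"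
    by (rule tv_norm_bind_contract[OF _ _ l]) (use mixing lipschitz in blast)+
  finally show ?thesis .
qed

lemma tendsto_zero_if_quadratic_decrease:
  fixes s :: "nat \<Rightarrow> real"
  assumes s: "\<And>n. 0 \<le> s n" and a: "0 < a"
    and decrease: "\<And>n. s (Suc n) \<le> s n * (1 - a * s n / 2)"
  shows "s \<longlonglongrightarrow> 0"
proof -
  have "s (Suc n) \<le> s n" for n
  proof -
    have "s n * (1 - a * s n / 2) = s n - a * (s n * s n) / 2" by (simp add: algebra_simps)
    moreover have "0 \<le> a * (s n * s n)" using a by simp
    ultimately show ?thesis using decrease[of n] by linarith
  qed
  then have "decseq s" by (rule decseq_SucI)
  then obtain L where L: "s \<longlonglongrightarrow> L" using decseq_convergent[of s 0] s by blast
  have "(\<lambda>n. s (Suc n)) \<longlonglongrightarrow> L" using L by (rule LIMSEQ_Suc)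
  moreover have "(\<lambda>n. s n * (1 - a * s n / 2)) \<longlonglongrightarrow> L * (1 - a * L / 2)"
    using L by (intro tendsto_intros) auto
  ultimately have "L \<le> L * (1 - a * L / 2)"
    by (rule LIMSEQ_le) (use decrease in auto)
  then have "a * (L * L) \<le> 0" by (simp add: algebra_simps)
  then have "L * L \<le> 0" using a by (simp add: mult_le_0_iff)
  moreover have "0 \<le> L" using L s by (intro LIMSEQ_le_const) auto
  ultimately have "L = 0" by (metis mult_eq_0_iff mult_nonneg_nonneg order.antisym)
  then show ?thesis using L by simp
qed

lemma filterlim_div_nat_at_top: "0 < (k::nat) \<Longrightarrow> filterlim (\<lambda>j. j div k) at_top sequentially"
  unfolding filterlim_at_top eventually_sequentially
  by (metis div_le_mono div_mult_self_is_m)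

lemma tendsto_zero_if_residue_classes:
  fixes d :: "nat \<Rightarrow> real"
  assumes k: "0 < k" and d: "\<And>j. 0 \<le> d j"
    and classes: "\<And>r. (\<lambda>n. d (r + n * k)) \<longlonglongrightarrow> 0"
  shows "d \<longlonglongrightarrow> 0"
proof -
  define S where "S n = (\<Sum>r<k. d (r + n * k))" for n
  have "S \<longlonglongrightarrow> 0" unfolding S_def using classes by (intro tendsto_null_sum) auto
  then have "(\<lambda>j. S (j div k)) \<longlonglongrightarrow> 0" by (rule filterlim_compose[OF _ filterlim_div_nat_at_top[OF k]])
  moreover have "d j \<le> S (j div k)" for j
  proof -
    have "d j = d (j mod k + j div k * k)" by simp
    also have "\<dots> \<le> S (j div k)" unfolding S_def by (rule member_le_sum) (use k d in auto)
    finally show ?thesis .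
  qed
  ultimately show ?thesis by (intro tendsto_sandwich[of "\<lambda>_. 0" d _ "\<lambda>j. S (j div k)"]) (auto simp: d)
qed

lemma tv_norm_law_at_tendsto_invariant:
  fixes P :: "'a::finite pmf \<Rightarrow> 'a \<Rightarrow> 'a pmf"
  assumes k: "0 < k" and a: "0 < a"
    and mixing: "\<forall>x y \<mu>' \<nu>'. tv_norm (kstep_kernel P k \<mu>' x) (kstep_kernel P k \<nu>' y) \<le> 2 * (1 - a)"
    and l: "0 \<le> l" "l \<le> a"
    and lipschitz: "\<forall>x \<mu>' \<nu>'. tv_norm (kstep_kernel P k \<mu>' x) (kstep_kernel P k \<nu>' x) \<le> l * tv_norm \<mu>' \<nu>'"
    and inv: "law_step P \<pi> = \<pi>"
  shows "(\<lambda>j. tv_norm (law_at P \<mu> j) \<pi>) \<longlonglongrightarrow> 0"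
proof (rule tendsto_zero_if_residue_classes[OF k tv_norm_nonneg])
  fix r
  show "(\<lambda>n. tv_norm (law_at P \<mu> (r + n * k)) \<pi>) \<longlonglongrightarrow> 0"
  proof (rule tendsto_zero_if_quadratic_decrease[OF tv_norm_nonneg a])
    fix n
    show "tv_norm (law_at P \<mu> (r + Suc n * k)) \<pi>
      \<le> tv_norm (law_at P \<mu> (r + n * k)) \<pi> * (1 - a * tv_norm (law_at P \<mu> (r + n * k)) \<pi> / 2)"
      using tv_norm_law_at_add_le[OF mixing l lipschitz inv, of \<mu> "r + n * k"] by (simp add: ac_simps)
  qed
qed

lemma pmf_avg_tendsto_if_tv_norm:
  assumes "(\<lambda>j. tv_norm (p j) q) \<longlonglongrightarrow> 0"
  shows "(\<lambda>j. pmf_avg (p j) f) \<longlonglongrightarrow> pmf_avg q f"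
proof -
  define B where "B = (\<Sum>x\<in>UNIV. \<bar>f x\<bar>)"
  have "\<bar>f x\<bar> \<le> B" for x unfolding B_def by (rule member_le_sum) auto
  then have bound: "norm (pmf_avg (p j) f - pmf_avg q f) \<le> B * tv_norm (p j) q" for j
    by (simp add: abs_pmf_avg_diff_le)
  have "(\<lambda>j. pmf_avg (p j) f - pmf_avg q f) \<longlonglongrightarrow> 0"
  proof (rule Lim_null_comparison)
    show "\<forall>\<^sub>F j in sequentially. norm (pmf_avg (p j) f - pmf_avg q f) \<le> B * tv_norm (p j) q"
      using bound by (intro always_eventually allI)
    show "(\<lambda>j. B * tv_norm (p j) q) \<longlonglongrightarrow> 0" by (rule tendsto_mult_right_zero[OF assms])
  qed
  then show ?thesis by (simp add: LIM_zero_iff)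
qed

section \<open>Expectations over paths\<close>

definition paths :: "nat \<Rightarrow> 'a list set" where
  "paths m = {xs. length xs = Suc m}"

text \<open>By the definition of nonlinear_markov_chain, path_weight P \<mu> m xs is the probability
  that (X_0, ..., X_m) = xs, so path_exp P \<mu> m G = E[G(X_0, ..., X_m)].\<close>

definition path_weight :: "('a pmf \<Rightarrow> 'a \<Rightarrow> 'a pmf) \<Rightarrow> 'a pmf \<Rightarrow> nat \<Rightarrow> 'a list \<Rightarrow> real" where
  "path_weight P \<mu> m xs = pmf \<mu> (xs ! 0) * (\<Prod>i<m. pmf (P (law_at P \<mu> i) (xs ! i)) (xs ! Suc i))"

definition path_exp :: "('a pmf \<Rightarrow> 'a \<Rightarrow> 'a pmf) \<Rightarrow> 'a pmf \<Rightarrow> nat \<Rightarrow> ('a list \<Rightarrow> real) \<Rightarrow> real" where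
  "path_exp P \<mu> m G = (\<Sum>xs\<in>paths m. path_weight P \<mu> m xs * G xs)"

lemma finite_paths: "finite (paths m :: 'a::finite list set)"
proof -
  have "paths m = {xs::'a list. set xs \<subseteq> UNIV \<and> length xs = Suc m}" by (auto simp: paths_def)
  then show ?thesis using finite_lists_length_eq[of "UNIV::'a set" "Suc m"] by simp
qed

lemma path_weight_nonneg: "0 \<le> path_weight P \<mu> m xs"
  unfolding path_weight_def by (intro mult_nonneg_nonneg prod_nonneg) auto

lemma paths_0: "paths 0 = (\<lambda>x. [x]) ` UNIV"
  by (auto simp: paths_def length_Suc_conv)

lemma paths_Suc: "paths (Suc m) = (\<lambda>(xs, y). xs @ [y]) ` (paths m \<times> UNIV)"
  by (auto simp: paths_def length_Suc_conv_rev image_iff)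

lemma path_weight_snoc:
  assumes "xs \<in> paths m"
  shows "path_weight P \<mu> (Suc m) (xs @ [y]) = path_weight P \<mu> m xs * pmf (P (law_at P \<mu> m) (last xs)) y"
proof -
  have len: "length xs = Suc m" using assms by (simp add: paths_def)
  have prefix: "(xs @ [y]) ! i = xs ! i" if "i \<le> m" for i using that len by (simp add: nth_append)
  have "(\<Prod>i<m. pmf (P (law_at P \<mu> i) ((xs @ [y]) ! i)) ((xs @ [y]) ! Suc i))
      = (\<Prod>i<m. pmf (P (law_at P \<mu> i) (xs ! i)) (xs ! Suc i))"
    by (rule prod.cong) (auto simp: prefix)
  moreover have "(xs @ [y]) ! Suc m = y" using len by (simp add: nth_append)
  moreover have "last xs = xs ! m" using len by (subst last_conv_nth) auto
  ultimately show ?thesis unfolding path_weight_def using prefix[of 0] prefix[of m] by (simp add: mult_ac)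
qed

lemma path_exp_0: "path_exp P \<mu> 0 G = pmf_avg \<mu> (\<lambda>x. G [x])"
  unfolding path_exp_def paths_0 by (subst sum.reindex) (auto simp: inj_on_def path_weight_def pmf_avg_def)

lemma path_exp_Suc:
  "path_exp P \<mu> (Suc m) G = path_exp P \<mu> m (\<lambda>xs. pmf_avg (P (law_at P \<mu> m) (last xs)) (\<lambda>y. G (xs @ [y])))"
proof -
  have inj: "inj_on (\<lambda>(xs, y). xs @ [y]) (paths m \<times> (UNIV::'a set))"
    by (auto simp: inj_on_def)
  have "path_exp P \<mu> (Suc m) G
      = (\<Sum>p\<in>paths m \<times> UNIV. path_weight P \<mu> (Suc m) (fst p @ [snd p]) * G (fst p @ [snd p]))"
    unfolding path_exp_def paths_Suc by (subst sum.reindex[OF inj]) (simp add: case_prod_beta)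
  also have "\<dots> = (\<Sum>xs\<in>paths m. \<Sum>y\<in>UNIV. path_weight P \<mu> (Suc m) (xs @ [y]) * G (xs @ [y]))"
    by (subst sum.cartesian_product) (simp add: case_prod_beta)
  also have "\<dots> = path_exp P \<mu> m (\<lambda>xs. pmf_avg (P (law_at P \<mu> m) (last xs)) (\<lambda>y. G (xs @ [y])))"
    unfolding path_exp_def pmf_avg_def
    by (rule sum.cong[OF refl]) (simp add: path_weight_snoc sum_distrib_left mult_ac)
  finally show ?thesis .
qed

lemma path_exp_add: "path_exp P \<mu> m (\<lambda>xs. F xs + G xs) = path_exp P \<mu> m F + path_exp P \<mu> m G"
  unfolding path_exp_def by (simp add: distrib_left sum.distrib)

lemma path_exp_cmult: "path_exp P \<mu> m (\<lambda>xs. c * G xs) = c * path_exp P \<mu> m G"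
  unfolding path_exp_def by (simp add: sum_distrib_left mult_ac)

lemma path_exp_cong: "(\<And>xs. xs \<in> paths m \<Longrightarrow> F xs = G xs) \<Longrightarrow> path_exp P \<mu> m F = path_exp P \<mu> m G"
  unfolding path_exp_def by (rule sum.cong) auto

lemma path_exp_last: "path_exp P \<mu> m (\<lambda>xs. \<psi> (last xs)) = pmf_avg (law_at P \<mu> m) \<psi>"
proof (induction m arbitrary: \<psi>)
  case 0
  show ?case by (simp add: path_exp_0)
next
  case (Suc m)
  have "path_exp P \<mu> (Suc m) (\<lambda>xs. \<psi> (last xs)) = path_exp P \<mu> m (\<lambda>xs. transfer P \<mu> m \<psi> (last xs))"
    by (simp add: path_exp_Suc transfer_def)
  then show ?case by (simp add: Suc pmf_avg_transfer)
qed

section \<open>The second moment of the centred sums\<close>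

lemma cesaro_abs_tendsto_zero:
  fixes a :: "nat \<Rightarrow> real"
  assumes "a \<longlonglongrightarrow> 0"
  shows "(\<lambda>n. (\<Sum>j<n. \<bar>a j\<bar>) / real n) \<longlonglongrightarrow> 0"
proof (rule LIMSEQ_I)
  fix \<epsilon> :: real assume \<epsilon>: "0 < \<epsilon>"
  obtain N where N: "\<And>j. N \<le> j \<Longrightarrow> \<bar>a j\<bar> < \<epsilon> / 2"
    using LIMSEQ_D[OF assms, of "\<epsilon> / 2"] \<epsilon> by auto
  define C where "C = (\<Sum>j<N. \<bar>a j\<bar>)"
  obtain N' where N': "\<And>n. N' \<le> n \<Longrightarrow> \<bar>C / real n\<bar> < \<epsilon> / 2"
    using LIMSEQ_D[OF lim_const_over_n[of C], of "\<epsilon> / 2"] \<epsilon> by auto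
  have "\<bar>(\<Sum>j<n. \<bar>a j\<bar>) / real n\<bar> < \<epsilon>" if n: "max (Suc N) N' \<le> n" for n
  proof -
    have split: "(\<Sum>j<n. \<bar>a j\<bar>) = C + (\<Sum>j\<in>{N..<n}. \<bar>a j\<bar>)"
      using n by (simp add: C_def lessThan_atLeast0 sum.atLeastLessThan_concat)
    have "(\<Sum>j\<in>{N..<n}. \<bar>a j\<bar>) \<le> (\<Sum>j\<in>{N..<n}. \<epsilon> / 2)"
    proof (rule sum_mono)
      fix j assume "j \<in> {N..<n}"
      then show "\<bar>a j\<bar> \<le> \<epsilon> / 2" using N[of j] by simp
    qed
    also have "\<dots> \<le> real n * (\<epsilon> / 2)"
      using \<epsilon> by (simp add: mult_right_mono)
    finally have "(\<Sum>j<n. \<bar>a j\<bar>) / real n \<le> C / real n + \<epsilon> / 2"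
      using n unfolding split by (simp add: field_simps)
    moreover have "C / real n < \<epsilon> / 2" using N'[of n] n by (simp add: C_def sum_nonneg)
    moreover have "0 \<le> (\<Sum>j<n. \<bar>a j\<bar>) / real n" by (simp add: sum_nonneg)
    ultimately show ?thesis by (subst abs_of_nonneg) linarith+
  qed
  then show "\<exists>no. \<forall>n\<ge>no. norm ((\<Sum>j<n. \<bar>a j\<bar>) / real n - 0) < \<epsilon>"
    by (intro exI[of _ "max (Suc N) N'"] allI impI) auto
qed

lemma path_exp_sum_mult_last:
  "path_exp P \<mu> m (\<lambda>xs. (\<Sum>x\<leftarrow>xs. h x) * \<psi> (last xs))
    = (\<Sum>i\<le>m. pmf_avg (law_at P \<mu> i) (\<lambda>x. h x * transfer_pow P \<mu> i (m - i) \<psi> x))"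
proof (induction m arbitrary: \<psi>)
  case 0
  show ?case by (simp add: path_exp_0)
next
  case (Suc m)
  have "path_exp P \<mu> (Suc m) (\<lambda>xs. (\<Sum>x\<leftarrow>xs. h x) * \<psi> (last xs))
      = path_exp P \<mu> m (\<lambda>xs. (\<Sum>x\<leftarrow>xs. h x) * transfer P \<mu> m \<psi> (last xs)
          + transfer P \<mu> m (\<lambda>y. h y * \<psi> y) (last xs))"
    unfolding path_exp_Suc transfer_def
    by (rule path_exp_cong) (simp add: distrib_right pmf_avg_add pmf_avg_cmult)
  also have "\<dots> = (\<Sum>i\<le>m. pmf_avg (law_at P \<mu> i) (\<lambda>x. h x * transfer_pow P \<mu> i (m - i) (transfer P \<mu> m \<psi>) x))
      + pmf_avg (law_at P \<mu> (Suc m)) (\<lambda>y. h y * \<psi> y)"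
    by (simp add: path_exp_add Suc.IH path_exp_last pmf_avg_transfer)
  also have "(\<Sum>i\<le>m. pmf_avg (law_at P \<mu> i) (\<lambda>x. h x * transfer_pow P \<mu> i (m - i) (transfer P \<mu> m \<psi>) x))
      = (\<Sum>i\<le>m. pmf_avg (law_at P \<mu> i) (\<lambda>x. h x * transfer_pow P \<mu> i (Suc m - i) \<psi> x))"
  proof (rule sum.cong[OF refl])
    fix i assume "i \<in> {..m}"
    then have "transfer_pow P \<mu> i (Suc m - i) \<psi> = transfer_pow P \<mu> i (m - i) (transfer P \<mu> m \<psi>)"
      using transfer_pow_Suc_right[of P \<mu> i "m - i" \<psi>] by (simp add: Suc_diff_le)
    then show "pmf_avg (law_at P \<mu> i) (\<lambda>x. h x * transfer_pow P \<mu> i (m - i) (transfer P \<mu> m \<psi>) x)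
      = pmf_avg (law_at P \<mu> i) (\<lambda>x. h x * transfer_pow P \<mu> i (Suc m - i) \<psi> x)"
      by simp
  qed
  finally show ?case by simp
qed

lemma path_exp_square_Suc:
  "path_exp P \<mu> (Suc m) (\<lambda>xs. (\<Sum>x\<leftarrow>xs. h x)\<^sup>2)
   = path_exp P \<mu> m (\<lambda>xs. (\<Sum>x\<leftarrow>xs. h x)\<^sup>2)
     + 2 * path_exp P \<mu> m (\<lambda>xs. (\<Sum>x\<leftarrow>xs. h x) * transfer P \<mu> m h (last xs))
     + pmf_avg (law_at P \<mu> (Suc m)) (\<lambda>y. (h y)\<^sup>2)"
proof -
  have "path_exp P \<mu> (Suc m) (\<lambda>xs. (\<Sum>x\<leftarrow>xs. h x)\<^sup>2)
      = path_exp P \<mu> m (\<lambda>xs. (\<Sum>x\<leftarrow>xs. h x)\<^sup>2 + 2 * ((\<Sum>x\<leftarrow>xs. h x) * transfer P \<mu> m h (last xs))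
          + transfer P \<mu> m (\<lambda>y. (h y)\<^sup>2) (last xs))"
    unfolding path_exp_Suc transfer_def
    by (rule path_exp_cong) (simp add: power2_sum pmf_avg_add pmf_avg_cmult mult.assoc)
  then show ?thesis by (simp add: path_exp_add path_exp_cmult path_exp_last pmf_avg_transfer)
qed

lemma cross_term_bound:
  fixes P :: "'a::finite pmf \<Rightarrow> 'a \<Rightarrow> 'a pmf"
  assumes mixing: "\<forall>x y \<mu>' \<nu>'. tv_norm (kstep_kernel P k \<mu>' x) (kstep_kernel P k \<nu>' y) \<le> 2 * (1 - a)"
    and h: "\<And>x. \<bar>h x\<bar> \<le> H"
  shows "\<bar>path_exp P \<mu> m (\<lambda>xs. (\<Sum>x\<leftarrow>xs. h x) * transfer P \<mu> m h (last xs))\<bar>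
    \<le> H * (real (Suc m) * \<bar>pmf_avg (law_at P \<mu> (Suc m)) h\<bar> + 2 * H * (\<Sum>j<Suc m. (1 - a) ^ (j div k)))"
proof -
  let ?e = "pmf_avg (law_at P \<mu> (Suc m)) h"
  let ?\<rho> = "\<lambda>j. (1 - a) ^ (j div k)"
  have osc: "osc_le (transfer P \<mu> m h) (2 * H)"
    using osc_le_transfer_pow[OF osc_le_if_abs_le[OF h], of P \<mu> m 1] by simp
  have summand: "\<bar>pmf_avg (law_at P \<mu> i) (\<lambda>x. h x * transfer_pow P \<mu> i (m - i) (transfer P \<mu> m h) x)\<bar>
      \<le> H * (\<bar>?e\<bar> + ?\<rho> (m - i) * (2 * H))" if "i \<le> m" for i
  proof (rule abs_pmf_avg_le)
    fix x
    let ?V = "transfer_pow P \<mu> i (m - i) (transfer P \<mu> m h)"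
    have "pmf_avg (law_at P \<mu> i) ?V = ?e"
      using that by (simp add: pmf_avg_transfer_pow pmf_avg_transfer)
    moreover have "\<bar>?V x - pmf_avg (law_at P \<mu> i) ?V\<bar> \<le> ?\<rho> (m - i) * (2 * H)"
      by (rule abs_sub_pmf_avg_le_osc[OF osc_le_transfer_pow_decay[OF mixing osc]])
    ultimately have "\<bar>?V x\<bar> \<le> \<bar>?e\<bar> + ?\<rho> (m - i) * (2 * H)" by linarith
    then show "\<bar>h x * ?V x\<bar> \<le> H * (\<bar>?e\<bar> + ?\<rho> (m - i) * (2 * H))"
      unfolding abs_mult using h[of x] by (intro mult_mono) auto
  qed
  have "\<bar>path_exp P \<mu> m (\<lambda>xs. (\<Sum>x\<leftarrow>xs. h x) * transfer P \<mu> m h (last xs))\<bar>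
      \<le> (\<Sum>i\<le>m. H * (\<bar>?e\<bar> + ?\<rho> (m - i) * (2 * H)))"
    unfolding path_exp_sum_mult_last by (rule order.trans[OF sum_abs], rule sum_mono) (simp add: summand)
  also have "\<dots> = H * (\<Sum>i\<le>m. \<bar>?e\<bar> + ?\<rho> (m - i) * (2 * H))"
    by (rule sum_distrib_left[symmetric])
  also have "\<dots> = H * (real (Suc m) * \<bar>?e\<bar> + (\<Sum>i\<le>m. ?\<rho> (m - i)) * (2 * H))"
    by (simp add: sum.distrib sum_distrib_right)
  also have "(\<Sum>i\<le>m. ?\<rho> (m - i)) = (\<Sum>j<Suc m. ?\<rho> j)"
    using sum.nat_diff_reindex[of ?\<rho> "Suc m"] by (simp add: lessThan_Suc_atMost)
  finally show ?thesis by (simp add: mult_ac)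
qed

lemma second_moment_le:
  fixes P :: "'a::finite pmf \<Rightarrow> 'a \<Rightarrow> 'a pmf"
  assumes mixing: "\<forall>x y \<mu>' \<nu>'. tv_norm (kstep_kernel P k \<mu>' x) (kstep_kernel P k \<nu>' y) \<le> 2 * (1 - a)"
    and a: "a \<le> 1" and h: "\<And>x. \<bar>h x\<bar> \<le> H"
  shows "path_exp P \<mu> m (\<lambda>xs. (\<Sum>x\<leftarrow>xs. h x)\<^sup>2)
    \<le> real (Suc m) * H\<^sup>2 + 2 * H * real m * (\<Sum>j<m. \<bar>pmf_avg (law_at P \<mu> (Suc j)) h\<bar>)
      + 4 * H\<^sup>2 * real m * (\<Sum>j<m. (1 - a) ^ (j div k))"
proof -
  have H: "0 \<le> H" using h[of undefined] by linarith
  have square_bound: "\<bar>(h x)\<^sup>2\<bar> \<le> H\<^sup>2" for x using power_mono[OF h[of x] abs_ge_zero, of 2] by simp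
  have square: "pmf_avg p (\<lambda>x. (h x)\<^sup>2) \<le> H\<^sup>2" for p
    by (rule abs_le_D1[OF abs_pmf_avg_le[OF square_bound]])
  show ?thesis
  proof (induction m)
    case 0
    show ?case using square[of \<mu>] by (simp add: path_exp_0)
  next
    case (Suc m)
    define E where "E = (\<Sum>j<m. \<bar>pmf_avg (law_at P \<mu> (Suc j)) h\<bar>)"
    define R where "R = (\<Sum>j<m. (1 - a) ^ (j div k))"
    define e where "e = \<bar>pmf_avg (law_at P \<mu> (Suc m)) h\<bar>"
    define \<rho> where "\<rho> = (1 - a) ^ (m div k)"
    have "0 \<le> E" "0 \<le> \<rho>" using a by (simp_all add: E_def \<rho>_def sum_nonneg)
    have "path_exp P \<mu> (Suc m) (\<lambda>xs. (\<Sum>x\<leftarrow>xs. h x)\<^sup>2)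
        \<le> (real (Suc m) * H\<^sup>2 + 2 * H * real m * E + 4 * H\<^sup>2 * real m * R)
          + 2 * (H * (real (Suc m) * e + 2 * H * (R + \<rho>))) + H\<^sup>2"
      using Suc.IH cross_term_bound[where h = h and H = H and \<mu> = \<mu> and m = m, OF mixing h]
        square[of "law_at P \<mu> (Suc m)"]
      unfolding path_exp_square_Suc E_def R_def e_def \<rho>_def by simp
    also have "\<dots> \<le> real (Suc (Suc m)) * H\<^sup>2 + 2 * H * real (Suc m) * (E + e)
        + 4 * H\<^sup>2 * real (Suc m) * (R + \<rho>)"
      using \<open>0 \<le> E\<close> \<open>0 \<le> \<rho>\<close> H by (simp add: algebra_simps power2_eq_square)
    finally show ?case by (simp add: E_def R_def e_def \<rho>_def)
  qed
qed

lemma second_moment_le_linear: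
  fixes P :: "'a::finite pmf \<Rightarrow> 'a \<Rightarrow> 'a pmf"
  assumes mixing: "\<forall>x y \<mu>' \<nu>'. tv_norm (kstep_kernel P k \<mu>' x) (kstep_kernel P k \<nu>' y) \<le> 2 * (1 - a)"
    and a: "a \<le> 1" and h: "\<And>x. \<bar>h x\<bar> \<le> H"
  shows "path_exp P \<mu> m (\<lambda>xs. (\<Sum>x\<leftarrow>xs. h x)\<^sup>2)
    \<le> real (Suc m) * (H\<^sup>2 + 2 * H * (\<Sum>j<Suc m. \<bar>pmf_avg (law_at P \<mu> (Suc j)) h\<bar>)
      + 4 * H\<^sup>2 * (\<Sum>j<Suc m. (1 - a) ^ (j div k)))"
proof -
  let ?E = "\<lambda>n. \<Sum>j<n. \<bar>pmf_avg (law_at P \<mu> (Suc j)) h\<bar>"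
  let ?R = "\<lambda>n. \<Sum>j<n. (1 - a) ^ (j div k)"
  have H: "0 \<le> H" using h[of undefined] by linarith
  have "?E m \<le> ?E (Suc m)" "?R m \<le> ?R (Suc m)" "0 \<le> ?E m" "0 \<le> ?R m"
    using a by (simp_all add: sum_nonneg)
  then have "2 * H * real m * ?E m \<le> 2 * H * real (Suc m) * ?E (Suc m)"
    and "4 * H\<^sup>2 * real m * ?R m \<le> 4 * H\<^sup>2 * real (Suc m) * ?R (Suc m)"
    using H by (intro mult_mono mult_left_mono; simp)+
  then show ?thesis
    using second_moment_le[where h = h and H = H and \<mu> = \<mu> and m = m, OF mixing a h]
    by (simp add: algebra_simps)
qed

lemma path_exp_nonneg: "(\<And>xs. 0 \<le> G xs) \<Longrightarrow> 0 \<le> path_exp P \<mu> m G"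
  unfolding path_exp_def by (intro sum_nonneg mult_nonneg_nonneg path_weight_nonneg)

lemma second_moment_tendsto_zero:
  fixes P :: "'a::finite pmf \<Rightarrow> 'a \<Rightarrow> 'a pmf"
  assumes mixing: "\<forall>x y \<mu>' \<nu>'. tv_norm (kstep_kernel P k \<mu>' x) (kstep_kernel P k \<nu>' y) \<le> 2 * (1 - a)"
    and k: "0 < k" and a: "0 < a" "a \<le> 1" and h: "\<And>x. \<bar>h x\<bar> \<le> H"
    and mean: "(\<lambda>j. pmf_avg (law_at P \<mu> j) h) \<longlonglongrightarrow> 0"
  shows "(\<lambda>m. path_exp P \<mu> m (\<lambda>xs. (\<Sum>x\<leftarrow>xs. h x)\<^sup>2) / (real (Suc m))\<^sup>2) \<longlonglongrightarrow> 0"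
proof -
  define E where "E n = (\<Sum>j<n. \<bar>pmf_avg (law_at P \<mu> (Suc j)) h\<bar>)" for n
  define R where "R n = (\<Sum>j<n. \<bar>(1 - a) ^ (j div k)\<bar>)" for n
  have E: "(\<lambda>n. E n / real n) \<longlonglongrightarrow> 0"
    unfolding E_def by (rule cesaro_abs_tendsto_zero[OF LIMSEQ_Suc[OF mean]])
  have R: "(\<lambda>n. R n / real n) \<longlonglongrightarrow> 0"
  proof -
    have "(\<lambda>j. (1 - a) ^ j) \<longlonglongrightarrow> 0" using a by (intro LIMSEQ_power_zero) auto
    from filterlim_compose[OF this filterlim_div_nat_at_top[OF k]] show ?thesis
      unfolding R_def by (rule cesaro_abs_tendsto_zero)
  qed
  define b where "b n = H\<^sup>2 / real n + 2 * H * (E n / real n) + 4 * H\<^sup>2 * (R n / real n)" for n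
  have "b \<longlonglongrightarrow> 0"
    unfolding b_def by (intro tendsto_add_zero tendsto_mult_right_zero lim_const_over_n E R)
  then have b: "(\<lambda>m. b (Suc m)) \<longlonglongrightarrow> 0" by (rule LIMSEQ_Suc)
  have "path_exp P \<mu> m (\<lambda>xs. (\<Sum>x\<leftarrow>xs. h x)\<^sup>2) / (real (Suc m))\<^sup>2 \<le> b (Suc m)" for m
  proof -
    have "(\<Sum>j<Suc m. (1 - a) ^ (j div k)) = R (Suc m)" unfolding R_def using a by simp
    then have "path_exp P \<mu> m (\<lambda>xs. (\<Sum>x\<leftarrow>xs. h x)\<^sup>2)
        \<le> real (Suc m) * (H\<^sup>2 + 2 * H * E (Suc m) + 4 * H\<^sup>2 * R (Suc m))"
      using second_moment_le_linear[where h = h and H = H and \<mu> = \<mu> and m = m, OF mixing a(2) h]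
      unfolding E_def by simp
    then have "path_exp P \<mu> m (\<lambda>xs. (\<Sum>x\<leftarrow>xs. h x)\<^sup>2) / (real (Suc m))\<^sup>2
        \<le> real (Suc m) * (H\<^sup>2 + 2 * H * E (Suc m) + 4 * H\<^sup>2 * R (Suc m)) / (real (Suc m))\<^sup>2"
      by (rule divide_right_mono) simp
    also have "\<dots> = b (Suc m)"
      unfolding b_def by (simp add: power2_eq_square add_divide_distrib)
    finally show ?thesis .
  qed
  then show ?thesis
    by (intro tendsto_sandwich[OF _ _ tendsto_const b] always_eventually allI)
      (simp_all add: path_exp_nonneg)
qed

section \<open>Deviation probabilities\<close>

lemma path_event_eq:
  fixes X :: "nat \<Rightarrow> 'b \<Rightarrow> 'a"
  assumes "xs \<in> paths m"
  shows "{\<omega> \<in> space M. map (\<lambda>i. X i \<omega>) [0..<Suc m] = xs} = {\<omega> \<in> space M. \<forall>i\<le>m. X i \<omega> = xs ! i}"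
proof -
  have "length xs = Suc m" using assms by (simp add: paths_def)
  then have "map (\<lambda>i. X i \<omega>) [0..<Suc m] = xs \<longleftrightarrow> (\<forall>i\<le>m. X i \<omega> = xs ! i)" for \<omega>
    by (auto simp: list_eq_iff_nth_eq less_Suc_eq_le simp del: upt_Suc)
  then show ?thesis by auto
qed

lemma path_event_sets:
  fixes X :: "nat \<Rightarrow> 'b \<Rightarrow> 'a"
  assumes X: "\<And>n. X n \<in> measurable M (count_space UNIV)"
  shows "{\<omega> \<in> space M. \<forall>i\<le>m. X i \<omega> = v i} \<in> sets M"
proof -
  have "{\<omega> \<in> space M. X i \<omega> = v i} \<in> sets M" for i
  proof -
    have "X i -` {v i} \<inter> space M \<in> sets M" by (rule measurable_sets[OF X]) simp
    moreover have "X i -` {v i} \<inter> space M = {\<omega> \<in> space M. X i \<omega> = v i}" by blast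
    ultimately show ?thesis by simp
  qed
  then have "{\<omega> \<in> space M. \<forall>i\<in>{..m}. X i \<omega> = v i} \<in> sets M"
    by (rule sets.sets_Collect_finite_All) simp
  then show ?thesis unfolding Ball_def atMost_iff .
qed

lemma measure_path_in_le:
  fixes P :: "'a::finite pmf \<Rightarrow> 'a \<Rightarrow> 'a pmf"
  assumes chain: "nonlinear_markov_chain M P \<mu> X" and A: "A \<subseteq> paths m"
  shows "measure M {\<omega> \<in> space M. map (\<lambda>i. X i \<omega>) [0..<Suc m] \<in> A} \<le> (\<Sum>xs\<in>A. path_weight P \<mu> m xs)"
proof -
  let ?event = "\<lambda>xs. {\<omega> \<in> space M. map (\<lambda>i. X i \<omega>) [0..<Suc m] = xs}"
  have "prob_space M" and X: "\<And>n. X n \<in> measurable M (count_space UNIV)"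
    and cylinder: "\<And>n x. measure M {\<omega> \<in> space M. \<forall>i\<le>n. X i \<omega> = x i}
      = pmf \<mu> (x 0) * (\<Prod>i<n. pmf (P (law_at P \<mu> i) (x i)) (x (Suc i)))"
    using chain by (simp_all add: nonlinear_markov_chain_def)
  then interpret prob_space M by simp
  have "finite A" using A finite_paths by (rule finite_subset)
  moreover have "?event ` A \<subseteq> sets M"
    using A by (auto simp: path_event_eq path_event_sets[OF X] simp del: upt_Suc)
  ultimately have "measure M (\<Union>xs\<in>A. ?event xs) \<le> (\<Sum>xs\<in>A. measure M (?event xs))"
    by (rule finite_measure_subadditive_finite)
  also have "\<dots> = (\<Sum>xs\<in>A. path_weight P \<mu> m xs)"
    using A by (intro sum.cong) (auto simp: path_event_eq cylinder path_weight_def simp del: upt_Suc)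
  finally have bound: "measure M (\<Union>xs\<in>A. ?event xs) \<le> (\<Sum>xs\<in>A. path_weight P \<mu> m xs)" .
  have "(\<Union>xs\<in>A. ?event xs) = {\<omega> \<in> space M. map (\<lambda>i. X i \<omega>) [0..<Suc m] \<in> A}"
    by blast
  with bound show ?thesis by simp
qed

lemma sum_path_weight_le_path_exp:
  fixes F :: "'a::finite list \<Rightarrow> real"
  assumes t: "0 < t"
  shows "(\<Sum>xs\<in>{xs \<in> paths m. t < \<bar>F xs\<bar>}. path_weight P \<mu> m xs) \<le> path_exp P \<mu> m (\<lambda>xs. (F xs)\<^sup>2) / t\<^sup>2"
proof -
  let ?A = "{xs \<in> paths m. t < \<bar>F xs\<bar>}"
  have "(\<Sum>xs\<in>?A. path_weight P \<mu> m xs) \<le> (\<Sum>xs\<in>?A. path_weight P \<mu> m xs * ((F xs)\<^sup>2 / t\<^sup>2))"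
  proof (rule sum_mono)
    fix xs assume "xs \<in> ?A"
    then have "t\<^sup>2 \<le> \<bar>F xs\<bar>\<^sup>2" using t by (intro power_mono) auto
    then have "1 \<le> (F xs)\<^sup>2 / t\<^sup>2" using t by simp
    then show "path_weight P \<mu> m xs \<le> path_weight P \<mu> m xs * ((F xs)\<^sup>2 / t\<^sup>2)"
      using mult_left_mono[OF _ path_weight_nonneg] by fastforce
  qed
  also have "\<dots> \<le> (\<Sum>xs\<in>paths m. path_weight P \<mu> m xs * ((F xs)\<^sup>2 / t\<^sup>2))"
    by (rule sum_mono2[OF finite_paths]) (auto simp: path_weight_nonneg)
  also have "\<dots> = path_exp P \<mu> m (\<lambda>xs. (F xs)\<^sup>2) / t\<^sup>2"
    unfolding path_exp_def by (simp add: sum_divide_distrib)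
  finally show ?thesis .
qed

lemma deviation_prob_le:
  fixes P :: "'a::finite pmf \<Rightarrow> 'a \<Rightarrow> 'a pmf"
  assumes chain: "nonlinear_markov_chain M P \<mu> X" and \<epsilon>: "0 < \<epsilon>"
  shows "measure M {\<omega> \<in> space M. \<bar>(\<Sum>j<Suc m. g (X j \<omega>)) / real (Suc m) - c\<bar> > \<epsilon>}
    \<le> path_exp P \<mu> m (\<lambda>xs. (\<Sum>x\<leftarrow>xs. g x - c)\<^sup>2) / (\<epsilon> * real (Suc m))\<^sup>2"
proof -
  let ?n = "real (Suc m)"
  let ?F = "\<lambda>xs. \<Sum>x\<leftarrow>xs. g x - c"
  have "(\<Sum>j<Suc m. g (X j \<omega>)) / ?n - c = ?F (map (\<lambda>i. X i \<omega>) [0..<Suc m]) / ?n" for \<omega>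
    by (simp add: interv_sum_list_conv_sum_set_nat atLeast0LessThan sum_subtractf field_simps)
  then have "{\<omega> \<in> space M. \<bar>(\<Sum>j<Suc m. g (X j \<omega>)) / ?n - c\<bar> > \<epsilon>}
      = {\<omega> \<in> space M. map (\<lambda>i. X i \<omega>) [0..<Suc m] \<in> {xs \<in> paths m. \<epsilon> * ?n < \<bar>?F xs\<bar>}}"
    by (auto simp: paths_def field_simps simp del: upt_Suc)
  also have "measure M \<dots> \<le> (\<Sum>xs\<in>{xs \<in> paths m. \<epsilon> * ?n < \<bar>?F xs\<bar>}. path_weight P \<mu> m xs)"
    by (rule measure_path_in_le[OF chain]) blast
  also have "\<dots> \<le> path_exp P \<mu> m (\<lambda>xs. (?F xs)\<^sup>2) / (\<epsilon> * ?n)\<^sup>2"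
    by (rule sum_path_weight_le_path_exp) (simp add: \<epsilon>)
  finally show ?thesis .
qed

lemma conv_in_prob_if_second_moment:
  fixes P :: "'a::finite pmf \<Rightarrow> 'a \<Rightarrow> 'a pmf"
  assumes chain: "nonlinear_markov_chain M P \<mu> X"
    and moment: "(\<lambda>m. path_exp P \<mu> m (\<lambda>xs. (\<Sum>x\<leftarrow>xs. g x - c)\<^sup>2) / (real (Suc m))\<^sup>2) \<longlonglongrightarrow> 0"
  shows "conv_in_prob M (\<lambda>n \<omega>. (\<Sum>j<n. g (X j \<omega>)) / real n) c"
  unfolding conv_in_prob_def
proof (intro allI impI)
  fix \<epsilon> :: real assume \<epsilon>: "0 < \<epsilon>"
  let ?dev = "\<lambda>n. measure M {\<omega> \<in> space M. \<bar>(\<Sum>j<n. g (X j \<omega>)) / real n - c\<bar> > \<epsilon>}"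
  let ?moment = "\<lambda>m. path_exp P \<mu> m (\<lambda>xs. (\<Sum>x\<leftarrow>xs. g x - c)\<^sup>2) / (real (Suc m))\<^sup>2"
  have "(\<lambda>m. ?dev (Suc m)) \<longlonglongrightarrow> 0"
  proof (rule tendsto_sandwich[OF _ _ tendsto_const])
    have "?dev (Suc m) \<le> ?moment m / \<epsilon>\<^sup>2" for m
      using deviation_prob_le[OF chain \<epsilon>, of g m c] by (simp add: power_mult_distrib mult.commute)
    then show "\<forall>\<^sub>F m in sequentially. ?dev (Suc m) \<le> ?moment m / \<epsilon>\<^sup>2"
      by (intro always_eventually allI)
    show "(\<lambda>m. ?moment m / \<epsilon>\<^sup>2) \<longlonglongrightarrow> 0"
      using tendsto_divide[OF moment tendsto_const, of "\<epsilon>\<^sup>2"] \<epsilon> by simp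
  qed simp
  then show "?dev \<longlonglongrightarrow> 0" by (rule LIMSEQ_imp_Suc)
qed

theorem theorem3:
  fixes P :: "('a::finite) pmf \<Rightarrow> 'a \<Rightarrow> 'a pmf"
    and k :: nat and alpha_k lambda_k lambda_1 :: real
    and \<pi> \<mu> :: "'a pmf" and g :: "'a \<Rightarrow> real"
    and M :: "'b measure" and X :: "nat \<Rightarrow> 'b \<Rightarrow> 'a"
  assumes k: "k \<ge> 1"
    and i: "0 < alpha_k" "alpha_k < 1"
      "\<forall>x y \<mu>' \<nu>'. tv_norm (kstep_kernel P k \<mu>' x) (kstep_kernel P k \<nu>' y) \<le> 2 * (1 - alpha_k)"
    and ii: "0 \<le> lambda_k" "lambda_k \<le> alpha_k"
      "\<forall>x \<mu>' \<nu>'. tv_norm (kstep_kernel P k \<mu>' x) (kstep_kernel P k \<nu>' x) \<le> lambda_k * tv_norm \<mu>' \<nu>'"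
    and iii: "\<forall>x \<mu>' \<nu>'. tv_norm (P \<mu>' x) (P \<nu>' x) \<le> lambda_1 * tv_norm \<mu>' \<nu>'"
    and inv: "law_step P \<pi> = \<pi>"
    and chain: "nonlinear_markov_chain M P \<mu> X"
  shows "conv_in_prob M (\<lambda>n \<omega>. (\<Sum>j<n. g (X j \<omega>)) / real n) (measure_pmf.expectation \<pi> g)"
proof -
  define c where "c = measure_pmf.expectation \<pi> g"
  define H where "H = (\<Sum>x\<in>UNIV. \<bar>g x - c\<bar>)"
  have H: "\<bar>g x - c\<bar> \<le> H" for x unfolding H_def by (rule member_le_sum) auto
  have "(\<lambda>j. tv_norm (law_at P \<mu> j) \<pi>) \<longlonglongrightarrow> 0"
    using k by (intro tv_norm_law_at_tendsto_invariant[OF _ i(1) i(3) ii inv]) simp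
  then have "(\<lambda>j. pmf_avg (law_at P \<mu> j) (\<lambda>x. g x - c)) \<longlonglongrightarrow> pmf_avg \<pi> (\<lambda>x. g x - c)"
    by (rule pmf_avg_tendsto_if_tv_norm)
  also have "pmf_avg \<pi> (\<lambda>x. g x - c) = 0"
    by (simp add: c_def expectation_eq_pmf_avg pmf_avg_def right_diff_distrib sum_subtractf
        sum_distrib_right[symmetric] sum_pmf_UNIV)
  finally have "(\<lambda>m. path_exp P \<mu> m (\<lambda>xs. (\<Sum>x\<leftarrow>xs. g x - c)\<^sup>2) / (real (Suc m))\<^sup>2) \<longlonglongrightarrow> 0"
    using k i(2) by (intro second_moment_tendsto_zero[OF i(3) _ i(1) _ H]) simp_all
  then show ?thesis unfolding c_def[symmetric] by (rule conv_in_prob_if_second_moment[OF chain])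
qed

end
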